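(* For integers $n\ge 0$ and $p$ with $p\le n+1$, $$\sum_{j,k}\binom{n}{k}\genfrac{\{}{\}}{0pt}{}{k}{j}\genfrac{[}{]}{0pt}{}{j+1}{p}(-1)^j=\begin{cases}0,&(n+1>p)\\(-1)^n,&(n+1=p).\end{cases}$$
   Context: Here $\genfrac{[}{]}{0pt}{}{n}{k}$ denotes the unsigned (absolute) Stirling number of the first kind and $\genfrac{\{}{\}}{0pt}{}{n}{k}$ the ordinary Stirling number of the second kind (Knuth's notation), with $\genfrac{[}{]}{0pt}{}{0}{0}=\genfrac{\{}{\}}{0pt}{}{0}{0}=1$, $\genfrac{[}{]}{0pt}{}{n}{0}=\genfrac{\{}{\}}{0pt}{}{n}{0}=0$ for $n>0$, and $\genfrac{[}{]}{0pt}{}{n}{k}=\genfrac{\{}{\}}{0pt}{}{n}{k}=0$ for $0\le n<k$. The double sum is over all integers $j,k$ with $0\le j\le k\le n$. *)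

theory Defs
  imports "HOL-Combinatorics.Stirling"
begin

definition stirling1_int :: "nat \<Rightarrow> int \<Rightarrow> int" where
  "stirling1_int n k = (if k < 0 then 0 else int (stirling n (nat k)))"

end

theory Submission
  imports Defs "HOL-Computational_Algebra.Polynomial"
begin

text \<open>
  The unsigned Stirling numbers \<open>stirling (j + 1) p\<close> are the coefficients of the rising
  factorial \<open>pochhammer x (j + 1) = x * pochhammer (x + 1) j\<close>, so the left-hand side is the
  coefficient of \<open>x ^ p\<close> in
  \<open>x * (\<Sum>k\<le>n. (n choose k) * (\<Sum>j\<le>k. Stirling k j * (-1) ^ j * pochhammer (x + 1) j))\<close>.
  The inner sum equals \<open>(-(x + 1)) ^ k\<close>, and the binomial theorem collapses the whole
  polynomial to \<open>x * (-x) ^ n = (-1) ^ n * x ^ (n + 1)\<close>.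
\<close>

text \<open>This is the expansion of \<open>z ^ k\<close> into falling factorials \<open>z (z - 1) \<cdots> (z - j + 1)\<close>
  with coefficients \<open>Stirling k j\<close>, taken at \<open>z = -y\<close>.\<close>
lemma sum_Stirling_alternating_pochhammer:
  fixes y :: "'a::comm_ring_1"
  shows "(\<Sum>j\<le>k. of_nat (Stirling k j) * (-1) ^ j * pochhammer y j) = (-y) ^ k"
proof (induction k)
  case 0
  show ?case by simp
next
  case (Suc k)
  define g where "g j = (-1) ^ j * pochhammer y j" for j
  have g_step: "-y * g j = g (Suc j) + of_nat j * g j" for j
    by (simp add: g_def pochhammer_Suc algebra_simps)
  have "(-y) ^ Suc k = (\<Sum>j\<le>k. of_nat (Stirling k j) * (-y * g j))"
    by (simp add: g_def sum_distrib_left mult_ac flip: Suc)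
  also have "\<dots> = (\<Sum>j\<le>k. of_nat (Stirling k j) * g (Suc j))
                  + (\<Sum>j\<le>k. of_nat (Stirling k j) * of_nat j * g j)"
    unfolding g_step by (simp add: distrib_left sum.distrib mult.assoc)
  also have "(\<Sum>j\<le>k. of_nat (Stirling k j) * of_nat j * g j)
           = (\<Sum>j\<le>k. of_nat (Stirling k (Suc j)) * of_nat (Suc j) * g (Suc j))"
  proof -
    have "(\<Sum>j\<le>k. of_nat (Stirling k j) * of_nat j * g j)
        = (\<Sum>j\<le>Suc k. of_nat (Stirling k j) * of_nat j * g j)"
      by simp
    then show ?thesis by (simp only: sum.atMost_Suc_shift) simp
  qed
  also have "(\<Sum>j\<le>k. of_nat (Stirling k j) * g (Suc j)) + \<dots>
           = (\<Sum>j\<le>k. of_nat (Stirling (Suc k) (Suc j)) * g (Suc j))"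
    by (simp add: sum.distrib algebra_simps)
  also have "\<dots> = (\<Sum>j\<le>Suc k. of_nat (Stirling (Suc k) j) * g j)"
    by (simp only: sum.atMost_Suc_shift) simp
  finally show ?case by (simp add: g_def mult.assoc)
qed

lemma binomial_Stirling_pochhammer_sum:
  fixes x :: "'a::comm_ring_1"
  shows "(\<Sum>k\<le>n. \<Sum>j\<le>k. of_nat (n choose k) * of_nat (Stirling k j) * (-1) ^ j * pochhammer x (Suc j))
         = (-1) ^ n * x ^ Suc n"
proof -
  have inner: "(\<Sum>j\<le>k. of_nat (n choose k) * of_nat (Stirling k j) * (-1) ^ j * pochhammer x (Suc j))
             = x * of_nat (n choose k) * (-(x + 1)) ^ k" for k
  proof -
    have "(\<Sum>j\<le>k. of_nat (n choose k) * of_nat (Stirling k j) * (-1) ^ j * pochhammer x (Suc j))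
        = x * of_nat (n choose k) * (\<Sum>j\<le>k. of_nat (Stirling k j) * (-1) ^ j * pochhammer (x + 1) j)"
      by (simp add: pochhammer_rec sum_distrib_left mult_ac)
    then show ?thesis
      by (simp only: sum_Stirling_alternating_pochhammer)
  qed
  have "(\<Sum>k\<le>n. \<Sum>j\<le>k. of_nat (n choose k) * of_nat (Stirling k j) * (-1) ^ j * pochhammer x (Suc j))
      = x * (\<Sum>k\<le>n. of_nat (n choose k) * (-(x + 1)) ^ k * 1 ^ (n - k))"
    unfolding inner by (simp add: sum_distrib_left mult.assoc)
  also have "\<dots> = x * (-(x + 1) + 1) ^ n"
    by (simp only: binomial_ring)
  also have "\<dots> = x * (-x) ^ n"
    by simp
  also have "\<dots> = (-1) ^ n * x ^ Suc n"
    by (subst power_minus) (simp add: mult_ac)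
  finally show ?thesis .
qed

lemma X_power_eq_monom: "[:0, 1:] ^ i = (monom 1 i :: 'a::comm_semiring_1 poly)"
  by (simp add: monom_altdef)

lemma coeff_pochhammer_X:
  "coeff (pochhammer [:0, 1:] m) q = (of_nat (stirling m q) :: 'a::comm_semiring_1)"
proof -
  have "coeff (pochhammer [:0, 1:] m) q = (\<Sum>i\<le>m. of_nat (stirling m i) * coeff ([:0, 1:] ^ i) q :: 'a)"
    by (simp add: coeff_sum of_nat_mult_conv_smult flip: stirling_pochhammer)
  also have "\<dots> = (\<Sum>i\<le>m. if i = q then of_nat (stirling m i) else 0)"
    by (intro sum.cong) (simp_all add: X_power_eq_monom)
  also have "\<dots> = of_nat (stirling m q)"
    by (simp add: sum.delta')
  finally show ?thesis .
qed

lemma coeff_minus_one_power_mult: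
  "coeff ((-1) ^ j * p) q = (-1) ^ j * coeff p (q :: nat)" for p :: "'a::comm_ring_1 poly"
  by (cases "even j") auto

theorem mainTheorem4:
  fixes n :: nat and p :: int
  assumes "p \<le> int n + 1"
  shows "(\<Sum>k\<le>n. \<Sum>j\<le>k. int (n choose k) * int (Stirling k j) * stirling1_int (j + 1) p * (-1) ^ j)
         = (if int n + 1 > p then 0 else (-1) ^ n)"
proof (cases "p < 0")
  case True
  then show ?thesis by (simp add: stirling1_int_def)
next
  case False
  then obtain q where q: "p = int q" by (metis nonneg_int_cases not_less)
  let ?X = "[:0, 1::int:]"
  have "(\<Sum>k\<le>n. \<Sum>j\<le>k. int (n choose k) * int (Stirling k j) * stirling1_int (j + 1) p * (-1) ^ j)
      = coeff (\<Sum>k\<le>n. \<Sum>j\<le>k. of_nat (n choose k) * of_nat (Stirling k j) * (-1) ^ j * pochhammer ?X (Suc j)) q"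
    by (simp add: coeff_sum q stirling1_int_def coeff_pochhammer_X of_nat_poly
                  coeff_minus_one_power_mult mult.assoc) (simp add: mult_ac)
  also have "\<dots> = coeff ((-1) ^ n * ?X ^ Suc n) q"
    by (simp only: binomial_Stirling_pochhammer_sum)
  also have "\<dots> = (if q = Suc n then (-1) ^ n else 0)"
    by (simp only: coeff_minus_one_power_mult X_power_eq_monom coeff_monom) simp
  finally show ?thesis using assms q by auto
qed

end
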